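(* Let $G$ be a graph with $n$ vertices (identified with its graph of positive edges), let $r\ge 1$, and let $P=\{v_1,\ldots,v_r\}$ be the first $r$ pivots chosen by running $\textsf{QwickCluster}$ on $G$ (all of its pivots, if it chooses fewer than $r$). Then the expected number of edges of $G$ not incident with any element of $P\cup\Gamma(P)$ is less than $\frac{n^2}{2(r+1)}$.
   Context: A complete ``$+$/$-$''-labeled graph on $V$ is identified with the graph $(V,E^+)$ of its positive edges. $\Gamma(v)$ is the set of (positive) neighbours of $v$ in $G$ and $\Gamma(S)=\bigcup_{v\in S}\Gamma(v)$. Algorithm $\textsf{QwickCluster}$: set $R\gets V$. While $R\neq\emptyset$: pick a pivot $v$ uniformly at random from $R$; output the cluster $C=\{v\}\cup(\Gamma(v)\cap R)$; set $R\gets R\setminus C$. *)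

theory Defs
  imports "HOL-Probability.Probability"
begin

definition simple_graph :: "'a set \<Rightarrow> 'a set set \<Rightarrow> bool" where
  "simple_graph V E \<longleftrightarrow> finite V \<and> (\<forall>e\<in>E. e \<subseteq> V \<and> card e = 2)"

definition nbr :: "'a set set \<Rightarrow> 'a \<Rightarrow> 'a set" where
  "nbr E v = {u. {u, v} \<in> E}"

definition nbrs :: "'a set set \<Rightarrow> 'a set \<Rightarrow> 'a set" where
  "nbrs E S = (\<Union>v\<in>S. nbr E v)"

text \<open>Distribution of the list of the first k pivots chosen by QwickCluster started
  with remaining set R (all pivots, if fewer than k are chosen).\<close>
primrec qc_pivots :: "'a set set \<Rightarrow> nat \<Rightarrow> 'a set \<Rightarrow> 'a list pmf" where
  "qc_pivots E 0 R = return_pmf []"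
| "qc_pivots E (Suc k) R =
     (if R = {} then return_pmf []
      else pmf_of_set R \<bind> (\<lambda>v. map_pmf (Cons v)
               (qc_pivots E k (R - ({v} \<union> (nbr E v \<inter> R))))))"

definition uncovered_edges :: "'a set set \<Rightarrow> 'a set \<Rightarrow> 'a set set" where
  "uncovered_edges E S = {e \<in> E. e \<inter> S = {}}"

end

(*
  Let R_k be the set of vertices left unclustered after k pivots; the uncovered edges are exactly
  the edges inside R_k, and twice their number is a(R_k), the number of ordered adjacent pairs in
  R_k.  A pivot v removes v and its neighbours, hence at least the sum of the degrees d(u) over
  u in {v} \<union> Gamma(v).  Averaged over v, the sum over u in Gamma(v) becomes (sum of d(u)^2) / |R|,
  which is at least a(R)^2 / |R|^2 by Cauchy-Schwarz.  So one step maps a to at most a - a^2/n^2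
  in expectation (n = |V|), and by Jensen x_k = E[a(R_k)] / n^2 obeys x_(k+1) <= x_k - x_k^2.
  Since x_0 < 1 (there are no loops), this recurrence forces x_k < 1/(k+1).
*)
theory Submission
  imports Defs
begin

definition qc_step :: "'a set set \<Rightarrow> 'a set \<Rightarrow> 'a set pmf" where
  "qc_step E R = (if R = {} then return_pmf {}
     else map_pmf (\<lambda>v. R - ({v} \<union> (nbr E v \<inter> R))) (pmf_of_set R))"

primrec qc_remaining :: "'a set set \<Rightarrow> nat \<Rightarrow> 'a set \<Rightarrow> 'a set pmf" where
  "qc_remaining E 0 R = return_pmf R"
| "qc_remaining E (Suc k) R = qc_step E R \<bind> qc_remaining E k"

lemma set_pmf_qc_step: "finite R \<Longrightarrow> set_pmf (qc_step E R) \<subseteq> Pow R"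
  by (auto simp: qc_step_def)

lemma set_pmf_qc_remaining: "finite R \<Longrightarrow> set_pmf (qc_remaining E k R) \<subseteq> Pow R"
proof (induction k arbitrary: R)
  case (Suc k)
  show ?case
  proof
    fix X assume "X \<in> set_pmf (qc_remaining E (Suc k) R)"
    then obtain R' where "R' \<in> set_pmf (qc_step E R)" and X: "X \<in> set_pmf (qc_remaining E k R')"
      by auto
    then have "R' \<subseteq> R" using set_pmf_qc_step[OF Suc.prems] by blast
    then show "X \<in> Pow R"
      using Suc.IH[of R'] X Suc.prems by (auto dest: finite_subset)
  qed
qed simp

lemma finite_set_pmf_qc_remaining: "finite R \<Longrightarrow> finite (set_pmf (qc_remaining E k R))"
  by (meson finite_Pow_iff finite_subset set_pmf_qc_remaining)

lemma qc_remaining_Suc_right: "qc_remaining E (Suc k) R = qc_remaining E k R \<bind> qc_step E"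
proof (induction k arbitrary: R)
  case 0
  have "qc_remaining E 0 = return_pmf" by (rule ext) simp
  then show ?case by (simp add: bind_return_pmf bind_return_pmf')
next
  case (Suc k)
  have IH: "qc_remaining E (Suc k) = (\<lambda>R'. qc_remaining E k R' \<bind> qc_step E)"
    by (rule ext) (rule Suc.IH)
  have "qc_remaining E (Suc (Suc k)) R = qc_step E R \<bind> qc_remaining E (Suc k)"
    by (rule qc_remaining.simps(2))
  also have "\<dots> = (qc_step E R \<bind> qc_remaining E k) \<bind> qc_step E"
    by (simp only: IH bind_assoc_pmf)
  finally show ?case by simp
qed

lemma qc_remaining_empty: "qc_remaining E k {} = return_pmf {}"
  by (induction k) (simp_all add: qc_step_def bind_return_pmf)

lemma map_pmf_qc_pivots_eq_qc_remaining:
  "map_pmf (\<lambda>P. R - (set P \<union> nbrs E (set P))) (qc_pivots E k R) = qc_remaining E k R"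
proof (induction k arbitrary: R)
  case 0
  then show ?case by (simp add: nbrs_def)
next
  case (Suc k)
  have "R - (set (v # P) \<union> nbrs E (set (v # P)))
          = R - ({v} \<union> (nbr E v \<inter> R)) - (set P \<union> nbrs E (set P))" for v P
    by (auto simp: nbrs_def)
  then show ?case
    by (simp add: qc_step_def qc_remaining_empty bind_return_pmf map_bind_pmf bind_map_pmf pmf.map_comp o_def
        flip: Suc.IH)
qed

definition adj_pairs :: "'a set set \<Rightarrow> 'a set \<Rightarrow> ('a \<times> 'a) set" where
  "adj_pairs E R = Sigma R (\<lambda>u. nbr E u \<inter> R)"

lemma finite_adj_pairs: "finite R \<Longrightarrow> finite (adj_pairs E R)"
  by (simp add: adj_pairs_def)

lemma card_adj_pairs_eq_sum_degree:
  "finite R \<Longrightarrow> card (adj_pairs E R) = (\<Sum>u\<in>R. card (nbr E u \<inter> R))"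
  by (simp add: adj_pairs_def)

lemma card_adj_pairs_eq_twice_edges:
  assumes "finite R" and "\<forall>e\<in>E. card e = 2"
  shows "card (adj_pairs E R) = 2 * card {e\<in>E. e \<subseteq> R}"
proof -
  define orient where "orient e = {(u, w). {u, w} = e \<and> u \<noteq> w}" for e :: "'a set"
  have card_orient: "card (orient e) = 2" if "e \<in> E" for e
  proof -
    obtain u w where "e = {u, w}" "u \<noteq> w"
      using assms(2) \<open>e \<in> E\<close> by (auto simp: card_2_iff)
    then have "orient e = {(u, w), (w, u)}"
      by (auto simp: orient_def doubleton_eq_iff)
    then show ?thesis using \<open>u \<noteq> w\<close> by simp
  qed
  have "adj_pairs E R = (\<Union>e\<in>{e\<in>E. e \<subseteq> R}. orient e)"
    using assms(2) by (fastforce simp: adj_pairs_def nbr_def orient_def insert_commute)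
  also have "card \<dots> = (\<Sum>e\<in>{e\<in>E. e \<subseteq> R}. card (orient e))"
    using card_orient \<open>finite R\<close>
    by (intro card_UN_disjoint) (auto simp: orient_def intro: card_ge_0_finite)
  also have "\<dots> = 2 * card {e\<in>E. e \<subseteq> R}"
    using card_orient by simp
  finally show ?thesis .
qed

lemma card_adj_pairs_less:
  assumes "finite V" and "V \<noteq> {}" and "\<forall>e\<in>E. card e = 2"
  shows "card (adj_pairs E V) < card V ^ 2"
proof -
  obtain v where "v \<in> V" using assms(2) by blast
  moreover have "(v, v) \<notin> adj_pairs E V"
    using assms(3) by (auto simp: adj_pairs_def nbr_def)
  ultimately have "adj_pairs E V \<subset> V \<times> V"
    by (auto simp: adj_pairs_def)
  then have "card (adj_pairs E V) < card (V \<times> V)"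
    using assms(1) by (intro psubset_card_mono) auto
  then show ?thesis by (simp add: card_cartesian_product power2_eq_square)
qed

lemma sum_degree_closed_nbr_add_adj_pairs_le:
  assumes "finite R" and "v \<in> R"
  shows "(\<Sum>u\<in>{v} \<union> (nbr E v \<inter> R). card (nbr E u \<inter> R))
           + card (adj_pairs E (R - ({v} \<union> (nbr E v \<inter> R)))) \<le> card (adj_pairs E R)"
proof -
  define C where "C = {v} \<union> (nbr E v \<inter> R)"
  have "C \<subseteq> R" using assms(2) by (auto simp: C_def)
  then have fin_C: "finite C" using assms(1) by (rule finite_subset)
  have "(\<Sum>u\<in>C. card (nbr E u \<inter> R)) = card (Sigma C (\<lambda>u. nbr E u \<inter> R))"
    using fin_C assms(1) by simp
  also have "\<dots> + card (adj_pairs E (R - C))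
               = card (Sigma C (\<lambda>u. nbr E u \<inter> R) \<union> adj_pairs E (R - C))"
    using fin_C assms(1)
    by (intro card_Un_disjoint[symmetric] finite_adj_pairs) (auto simp: adj_pairs_def)
  also have "\<dots> \<le> card (adj_pairs E R)"
    using \<open>C \<subseteq> R\<close> assms(1) by (intro card_mono finite_adj_pairs) (auto simp: adj_pairs_def)
  finally show ?thesis by (simp only: C_def)
qed

lemma sum_sum_nbr_eq_sum_degree:
  fixes f :: "'a \<Rightarrow> 'b::comm_semiring_1"
  assumes "finite R"
  shows "(\<Sum>v\<in>R. \<Sum>u\<in>nbr E v \<inter> R. f u) = (\<Sum>u\<in>R. of_nat (card (nbr E u \<inter> R)) * f u)"
proof -
  have "(\<Sum>v\<in>R. \<Sum>u\<in>nbr E v \<inter> R. f u) = (\<Sum>v\<in>R. \<Sum>u\<in>{u\<in>R. {u, v} \<in> E}. f u)"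
    by (intro sum.cong) (auto simp: nbr_def)
  also have "\<dots> = (\<Sum>u\<in>R. \<Sum>v\<in>{v\<in>R. {u, v} \<in> E}. f u)"
    by (rule sum.swap_restrict[OF assms assms])
  also have "\<dots> = (\<Sum>u\<in>R. of_nat (card (nbr E u \<inter> R)) * f u)"
    by (intro sum.cong) (auto simp: nbr_def insert_commute Int_def conj_commute)
  finally show ?thesis .
qed

lemma expectation_qc_step_adj_pairs_le:
  fixes E :: "'a set set"
  assumes "finite R"
  defines "a \<equiv> real (card (adj_pairs E R))"
  shows "measure_pmf.expectation (qc_step E R) (\<lambda>R'. real (card (adj_pairs E R')))
           \<le> a - a ^ 2 / real (card R) ^ 2"
proof (cases "R = {}")
  case True
  then show ?thesis by (simp add: qc_step_def a_def adj_pairs_def)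
next
  case False
  define n where "n = real (card R)"
  define d where "d u = real (card (nbr E u \<inter> R))" for u
  define rest where "rest v = R - ({v} \<union> (nbr E v \<inter> R))" for v
  have n_pos: "n > 0" using False assms(1) by (simp add: n_def card_gt_0_iff)
  have sum_d: "(\<Sum>u\<in>R. d u) = a"
    using assms(1) by (simp add: a_def d_def card_adj_pairs_eq_sum_degree)
  have removed: "real (card (adj_pairs E (rest v))) \<le> a - (\<Sum>u\<in>nbr E v \<inter> R. d u)"
    if "v \<in> R" for v
  proof -
    have "(\<Sum>u\<in>nbr E v \<inter> R. d u) \<le> (\<Sum>u\<in>{v} \<union> (nbr E v \<inter> R). d u)"
      using assms(1) by (intro sum_mono2) (auto simp: d_def)
    moreover have "(\<Sum>u\<in>{v} \<union> (nbr E v \<inter> R). d u) + real (card (adj_pairs E (rest v))) \<le> a"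
      using sum_degree_closed_nbr_add_adj_pairs_le[OF assms(1) that, of E]
      unfolding a_def d_def rest_def by (simp flip: of_nat_sum of_nat_add)
    ultimately show ?thesis by linarith
  qed
  have "n * measure_pmf.expectation (qc_step E R) (\<lambda>R'. real (card (adj_pairs E R')))
          = (\<Sum>v\<in>R. real (card (adj_pairs E (rest v))))"
    using False assms(1) n_pos by (simp add: qc_step_def integral_pmf_of_set n_def rest_def)
  also have "\<dots> \<le> (\<Sum>v\<in>R. a - (\<Sum>u\<in>nbr E v \<inter> R. d u))"
    by (rule sum_mono) (rule removed)
  also have "\<dots> = n * a - (\<Sum>u\<in>R. (d u) ^ 2)"
    using assms(1)
    by (simp add: sum_subtractf n_def sum_sum_nbr_eq_sum_degree power2_eq_square flip: d_def)
  also have "\<dots> \<le> n * a - a ^ 2 / n"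
    using sum_squared_le_sum_of_squares[of d R] n_pos
    by (simp add: sum_d n_def field_simps)
  finally show ?thesis
    using n_pos by (simp add: n_def field_simps power2_eq_square)
qed

lemma expectation_bind_le_quadratic_decrease:
  fixes f :: "'a \<Rightarrow> real" and c :: real
  assumes "finite (set_pmf p)" and "\<And>x. x \<in> set_pmf p \<Longrightarrow> finite (set_pmf (K x))"
    and "c \<ge> 0"
    and step: "\<And>x. x \<in> set_pmf p \<Longrightarrow> measure_pmf.expectation (K x) f \<le> f x - c * (f x) ^ 2"
  shows "measure_pmf.expectation (p \<bind> K) f
           \<le> measure_pmf.expectation p f - c * (measure_pmf.expectation p f) ^ 2"
proof -
  have int: "integrable (measure_pmf p) g" for g :: "'a \<Rightarrow> real"
    using assms(1) by (rule integrable_measure_pmf_finite)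
  have "measure_pmf.expectation (p \<bind> K) f
          = measure_pmf.expectation p (\<lambda>x. measure_pmf.expectation (K x) f)"
    using assms(1,2)
    by (subst pmf_expectation_bind[of "set_pmf p"]) (auto simp: integral_measure_pmf[of "set_pmf p"])
  also have "\<dots> \<le> measure_pmf.expectation p (\<lambda>x. f x - c * (f x) ^ 2)"
    by (intro integral_mono_AE int AE_pmfI step)
  also have "\<dots> = measure_pmf.expectation p f - c * measure_pmf.expectation p (\<lambda>x. (f x) ^ 2)"
    using int by simp
  also have "\<dots> \<le> measure_pmf.expectation p f - c * (measure_pmf.expectation p f) ^ 2"
    using measure_pmf.variance_positive[of p f] measure_pmf.variance_eq[OF int int, of f] assms(3)
    by (simp add: mult_left_mono)
  finally show ?thesis .
qed

lemma expectation_qc_remaining_Suc_le: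
  fixes E :: "'a set set"
  assumes "finite V"
  defines "X k \<equiv> measure_pmf.expectation (qc_remaining E k V) (\<lambda>R. real (card (adj_pairs E R)))"
  shows "X (Suc k) \<le> X k - (X k) ^ 2 / real (card V) ^ 2"
proof -
  have "X (Suc k) \<le> X k - 1 / real (card V) ^ 2 * (X k) ^ 2"
    unfolding X_def qc_remaining_Suc_right
  proof (rule expectation_bind_le_quadratic_decrease)
    fix R assume "R \<in> set_pmf (qc_remaining E k V)"
    then have "R \<subseteq> V" using set_pmf_qc_remaining[OF assms(1)] by blast
    then have fin_R: "finite R" and "card R \<le> card V"
      using assms(1) by (auto intro: finite_subset card_mono)
    then have "real (card (adj_pairs E R)) ^ 2 / real (card V) ^ 2
                 \<le> real (card (adj_pairs E R)) ^ 2 / real (card R) ^ 2"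
    proof (cases "R = {}")
      case False
      then have "0 < card R" using fin_R by (simp add: card_gt_0_iff)
      then show ?thesis
        using \<open>card R \<le> card V\<close> by (intro divide_left_mono power_mono mult_pos_pos) auto
    qed (simp add: adj_pairs_def)
    then show "measure_pmf.expectation (qc_step E R) (\<lambda>R. real (card (adj_pairs E R)))
           \<le> real (card (adj_pairs E R)) - 1 / real (card V) ^ 2 * (real (card (adj_pairs E R))) ^ 2"
      using expectation_qc_step_adj_pairs_le[OF fin_R, of E] by simp
    show "finite (set_pmf (qc_step E R))"
      using fin_R set_pmf_qc_step by (meson finite_Pow_iff finite_subset)
  qed (auto intro: finite_set_pmf_qc_remaining assms(1))
  then show ?thesis by simp
qed

lemma logistic_step_less:
  fixes t :: real
  assumes "0 \<le> t" and "t * (real k + 1) < 1"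
  shows "(t - t ^ 2) * (real k + 2) < 1"
proof (cases "t * (real k + 2) < 1")
  case True
  have "(t - t ^ 2) * (real k + 2) \<le> t * (real k + 2)"
    by (intro mult_right_mono) auto
  then show ?thesis using True by linarith
next
  case False
  have "(t - t ^ 2) * (real k + 2) = t * (real k + 1) + t * (1 - t * (real k + 2))"
    by (simp add: algebra_simps power2_eq_square)
  also have "\<dots> \<le> t * (real k + 1)"
    using False assms(1) by (simp add: mult_nonneg_nonpos)
  finally show ?thesis using assms(2) by linarith
qed

lemma logistic_iterate_bound:
  fixes x :: "nat \<Rightarrow> real"
  assumes "\<And>k. 0 \<le> x k" and "\<And>k. x (Suc k) \<le> x k - (x k) ^ 2" and "x 0 < 1"
  shows "x k * (real k + 1) < 1"
proof (induction k)
  case 0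
  then show ?case using assms(3) by simp
next
  case (Suc k)
  have "x (Suc k) * (real k + 2) \<le> (x k - (x k) ^ 2) * (real k + 2)"
    using assms(2) by (intro mult_right_mono) auto
  also have "\<dots> < 1"
    using assms(1) Suc.IH by (rule logistic_step_less)
  finally show ?case by (simp add: add.commute)
qed

lemma expectation_qc_remaining_adj_pairs_less:
  fixes E :: "'a set set"
  assumes "finite V" and "V \<noteq> {}" and "\<forall>e\<in>E. card e = 2"
  shows "measure_pmf.expectation (qc_remaining E k V) (\<lambda>R. real (card (adj_pairs E R)))
           < real (card V) ^ 2 / (real k + 1)"
proof -
  define N where "N = real (card V)"
  have "N > 0" using assms(1,2) by (simp add: N_def card_gt_0_iff)
  define x where
    "x k = measure_pmf.expectation (qc_remaining E k V) (\<lambda>R. real (card (adj_pairs E R))) / N ^ 2"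
    for k
  have "x k * (real k + 1) < 1"
  proof (rule logistic_iterate_bound)
    show "0 \<le> x k" for k
      by (simp add: x_def)
    show "x (Suc k) \<le> x k - (x k) ^ 2" for k
      using expectation_qc_remaining_Suc_le[OF assms(1), of E k] \<open>N > 0\<close>
      by (simp add: x_def N_def field_simps power2_eq_square)
    show "x 0 < 1"
      using card_adj_pairs_less[OF assms] \<open>N > 0\<close>
      by (simp add: x_def N_def flip: of_nat_power)
  qed
  then show ?thesis
    using \<open>N > 0\<close> by (simp add: x_def N_def field_simps)
qed

lemma expectation_uncovered_edges_qc_pivots:
  assumes "simple_graph V E"
  shows "measure_pmf.expectation (qc_pivots E k V)
           (\<lambda>P. real (card (uncovered_edges E (set P \<union> nbrs E (set P)))))
         = measure_pmf.expectation (qc_remaining E k V) (\<lambda>R. real (card (adj_pairs E R))) / 2"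
proof -
  have "finite V" and edge_card: "\<forall>e\<in>E. card e = 2" and edge_sub: "\<forall>e\<in>E. e \<subseteq> V"
    using assms by (auto simp: simple_graph_def)
  have "uncovered_edges E (set P \<union> nbrs E (set P))
          = {e\<in>E. e \<subseteq> V - (set P \<union> nbrs E (set P))}" for P
    using edge_sub by (auto simp: uncovered_edges_def)
  then have "measure_pmf.expectation (qc_pivots E k V)
               (\<lambda>P. real (card (uncovered_edges E (set P \<union> nbrs E (set P)))))
             = measure_pmf.expectation (qc_remaining E k V) (\<lambda>R. real (card {e\<in>E. e \<subseteq> R}))"
    by (simp flip: map_pmf_qc_pivots_eq_qc_remaining)
  also have "\<dots> = measure_pmf.expectation (qc_remaining E k V)
                     (\<lambda>R. real (card (adj_pairs E R)) / 2)"
  proof (intro integral_cong_AE AE_pmfI)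
    fix R assume "R \<in> set_pmf (qc_remaining E k V)"
    then have "finite R"
      using set_pmf_qc_remaining[OF \<open>finite V\<close>] \<open>finite V\<close> by (blast dest: finite_subset)
    then show "real (card {e\<in>E. e \<subseteq> R}) = real (card (adj_pairs E R)) / 2"
      using card_adj_pairs_eq_twice_edges[OF _ edge_card] by simp
  qed simp_all
  finally show ?thesis by simp
qed

theorem lemma3p3:
  fixes V :: "'a set" and E :: "'a set set" and r :: nat
  assumes "simple_graph V E" and "V \<noteq> {}" and "r \<ge> 1"
  shows "measure_pmf.expectation (qc_pivots E r V)
           (\<lambda>P. real (card (uncovered_edges E (set P \<union> nbrs E (set P)))))
         < real (card V) ^ 2 / (2 * (real r + 1))"
proof -
  have "finite V" and "\<forall>e\<in>E. card e = 2"
    using assms(1) by (auto simp: simple_graph_def)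
  then have "measure_pmf.expectation (qc_remaining E r V) (\<lambda>R. real (card (adj_pairs E R)))
               < real (card V) ^ 2 / (real r + 1)"
    using assms(2) by (intro expectation_qc_remaining_adj_pairs_less)
  then show ?thesis
    by (simp add: expectation_uncovered_edges_qc_pivots[OF assms(1)] field_simps)
qed

end
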